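(* Let $f: S^1 \rightarrow S^1$ be a Morse-Smale diffeomorphism. (i) If $f$ preserves orientation and all periodic points of $f$ have period $N$, then $\Omega(C(f))= Per_N(C(f)) \cup \{S^1\}$. (ii) If $f$ reverses orientation, then $\Omega(C(f))= Per_2(C(f)) \cup Fix(C(f))$.
   Context: A $C^r$ diffeomorphism ($r\ge1$) of a compact connected manifold without boundary is Morse-Smale if its nonwandering set consists of finitely many periodic points, all hyperbolic, with mutually transversal stable and unstable manifolds. $C(S^1)$ is the hyperspace of nonempty compact connected subsets of $S^1$ with the Hausdorff metric and $C(f)(A)=f(A)$. $\Omega(C(f))$ is the nonwandering set of $C(f)$, $Fix(C(f))$ its set of fixed points, and $Per_k(C(f))$ its set of periodic points of period $k$. *)

theory Defs
  imports "HOL-Analysis.Analysis"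
begin

definition S1 :: "complex set" where
  "S1 = sphere 0 1"

text \<open>The hyperspace C(S^1): nonempty compact connected subsets of S^1
  (metrised by the Hausdorff distance hausdist).\<close>
definition hyperspace_C :: "complex set set" where
  "hyperspace_C = {A. A \<subseteq> S1 \<and> A \<noteq> {} \<and> compact A \<and> connected A}"

definition hausdorff_dist :: "complex set \<Rightarrow> complex set \<Rightarrow> real" where
  "hausdorff_dist A B = max (SUP a\<in>A. infdist a B) (SUP b\<in>B. infdist b A)"

definition induced_map :: "(complex \<Rightarrow> complex) \<Rightarrow> complex set \<Rightarrow> complex set" where
  "induced_map f A = f ` A"

text \<open>Nonwandering set of a map g on a metric space (X,d): x is nonwandering iff
  every (ball) neighbourhood U of x satisfies g^n(U) \<inter> U \<noteq> {} for some n \<ge> 1.\<close>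
definition nonwandering_set :: "('a \<Rightarrow> 'a \<Rightarrow> real) \<Rightarrow> 'a set \<Rightarrow> ('a \<Rightarrow> 'a) \<Rightarrow> 'a set" where
  "nonwandering_set d X g =
     {x \<in> X. \<forall>e>0. \<exists>y\<in>X. \<exists>n\<ge>1. d x y < e \<and> d x ((g ^^ n) y) < e}"

definition periodic_points :: "'a set \<Rightarrow> ('a \<Rightarrow> 'a) \<Rightarrow> 'a set" where
  "periodic_points X g = {x \<in> X. \<exists>n>0. (g ^^ n) x = x}"

definition per_points :: "'a set \<Rightarrow> ('a \<Rightarrow> 'a) \<Rightarrow> nat \<Rightarrow> 'a set" where
  "per_points X g k =
     {x \<in> X. 0 < k \<and> (g ^^ k) x = x \<and> (\<forall>j. 0 < j \<and> j < k \<longrightarrow> (g ^^ j) x \<noteq> x)}"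

definition fixed_points :: "'a set \<Rightarrow> ('a \<Rightarrow> 'a) \<Rightarrow> 'a set" where
  "fixed_points X g = {x \<in> X. g x = x}"

definition circle_lift :: "(complex \<Rightarrow> complex) \<Rightarrow> (real \<Rightarrow> real) \<Rightarrow> bool" where
  "circle_lift f F \<longleftrightarrow> (\<forall>t. f (cis t) = cis (F t))"

definition circle_C1_diffeo :: "(complex \<Rightarrow> complex) \<Rightarrow> bool" where
  "circle_C1_diffeo f \<longleftrightarrow> f ` S1 = S1 \<and> inj_on f S1 \<and>
     (\<exists>F F'. circle_lift f F \<and> (\<forall>t. (F has_real_derivative F' t) (at t)) \<and>
             continuous_on UNIV F' \<and> (\<forall>t. F' t \<noteq> 0))"

definition hyperbolic_periodic_point :: "(complex \<Rightarrow> complex) \<Rightarrow> complex \<Rightarrow> bool" where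
  "hyperbolic_periodic_point f p \<longleftrightarrow>
     (\<forall>F. circle_lift f F \<and> (\<forall>t. F differentiable (at t)) \<longrightarrow>
        (\<forall>n>0. (f ^^ n) p = p \<longrightarrow> (\<forall>t. cis t = p \<longrightarrow> \<bar>deriv (F ^^ n) t\<bar> \<noteq> 1)))"

text \<open>Morse-Smale diffeomorphism of S^1 (transversality of stable/unstable manifolds
  is automatic in dimension one for hyperbolic periodic points).\<close>
definition morse_smale :: "(complex \<Rightarrow> complex) \<Rightarrow> bool" where
  "morse_smale f \<longleftrightarrow> circle_C1_diffeo f \<and>
     finite (nonwandering_set dist S1 f) \<and>
     nonwandering_set dist S1 f \<subseteq> periodic_points S1 f \<and>
     (\<forall>p \<in> nonwandering_set dist S1 f. hyperbolic_periodic_point f p)"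

definition orientation_preserving :: "(complex \<Rightarrow> complex) \<Rightarrow> bool" where
  "orientation_preserving f \<longleftrightarrow>
     (\<exists>F. continuous_on UNIV F \<and> circle_lift f F \<and> strict_mono F)"

definition orientation_reversing :: "(complex \<Rightarrow> complex) \<Rightarrow> bool" where
  "orientation_reversing f \<longleftrightarrow>
     (\<exists>F. continuous_on UNIV F \<and> circle_lift f F \<and> (\<forall>s t. s < t \<longrightarrow> F t < F s))"

end

theory Submission
  imports Defs
begin

text \<open>A nonwandering element of \<open>C(S^1)\<close> other than \<open>S^1\<close> is an arc \<open>[a, b]\<close>. Arcs close to it
  in the Hausdorff metric are arcs with endpoints close to \<open>a\<close> and \<open>b\<close>, and an iterate of \<open>f\<close> with
  increasing lift carries endpoints to endpoints; so if such an iterate brings an arc near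
  \<open>[a, b]\<close> back near \<open>[a, b]\<close>, then \<open>a\<close> and \<open>b\<close> return near themselves. Hence for orientation
  preserving \<open>f\<close> the endpoints are nonwandering, i.e. periodic of period \<open>N\<close>, and the arc has
  period \<open>N\<close> as well.

  For orientation reversing \<open>f\<close> with lift \<open>F\<close>, the map \<open>H = F \<circ> F\<close> is an increasing lift with
  fixed points in two classes modulo \<open>2*pi\<close>, and every periodic point of \<open>f\<close> is fixed by \<open>f^2\<close>.
  If an endpoint is not fixed by \<open>f^2\<close>, returns at odd times are impossible: they exchange the
  endpoints and produce an \<open>H\<close>-orbit from near \<open>a\<close> with one small jump that comes back near
  \<open>a\<close>, whereas \<open>H\<close> pushes all points between the neighbouring fixed points of \<open>a\<close> in one
  direction. Returns at even times again make the endpoints periodic, a contradiction; so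
  \<open>f^2\<close> fixes both endpoints and therefore the arc.\<close>

lemma continuous_on_UNIV_comp:
  "continuous_on UNIV (G :: real \<Rightarrow> real) \<Longrightarrow> continuous_on UNIV H \<Longrightarrow> continuous_on UNIV (G \<circ> H)"
  by (metis continuous_on_compose continuous_on_subset subset_UNIV)

lemma funpow_fixed: "H t = t \<Longrightarrow> (H ^^ m) t = t"
  by (induction m) auto

lemma funpow_Suc_double:
  "F ^^ Suc (2 * m) = F \<circ> (F \<circ> F) ^^ m" "F ^^ Suc (2 * m) = (F \<circ> F) ^^ m \<circ> F"
proof -
  have "(F \<circ> F) ^^ m = F ^^ (2 * m)" unfolding funpow_mult[symmetric] by (simp add: numeral_2_eq_2)
  then show "F ^^ Suc (2 * m) = F \<circ> (F \<circ> F) ^^ m" "F ^^ Suc (2 * m) = (F \<circ> F) ^^ m \<circ> F"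
    by (simp only: funpow.simps(2), simp only: funpow_Suc_right)
qed

lemma strict_mono_funpow_periodic_imp_fixed:
  fixes H :: "'a::linorder \<Rightarrow> 'a"
  assumes H: "strict_mono H" and "p > 0" "(H ^^ p) t = t"
  shows "H t = t"
proof -
  have up: "t < (H ^^ Suc m) t" if "t < H t" for m
    using that by (induction m) (auto intro: less_trans strict_mono_less[OF H, THEN iffD2])
  have down: "(H ^^ Suc m) t < t" if "H t < t" for m
    using that by (induction m) (auto intro: less_trans strict_mono_less[OF H, THEN iffD2])
  show ?thesis
    using up[of "p - 1"] down[of "p - 1"] assms(2,3) by (cases "t < H t"; cases "H t < t") auto
qed

lemma mono_funpow_between_fixed:
  fixes H :: "'a::linorder \<Rightarrow> 'a"
  assumes "mono H" "H p = p" "H q = q" "p \<le> t" "t \<le> q"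
  shows "p \<le> (H ^^ m) t \<and> (H ^^ m) t \<le> q"
proof (induction m)
  case (Suc m)
  then show ?case using monoD[OF assms(1), of p "(H ^^ m) t"] monoD[OF assms(1), of "(H ^^ m) t" q] assms(2,3)
    by auto
qed (use assms in simp)

lemma mono_funpow_increasing:
  fixes H :: "'a::linorder \<Rightarrow> 'a"
  assumes "mono H" "H q = q" "\<And>s. p < s \<Longrightarrow> s < q \<Longrightarrow> s < H s" "p < t" "t \<le> q"
  shows "t \<le> (H ^^ m) t \<and> (H ^^ m) t \<le> q"
proof (induction m)
  case (Suc m)
  define s where "s = (H ^^ m) t"
  have "s \<le> H s" using Suc assms(2-4) unfolding s_def[symmetric] by (cases "s = q") (auto intro: less_imp_le)
  moreover have "H s \<le> q" using monoD[OF assms(1), of s q] Suc assms(2) by (simp add: s_def)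
  ultimately show ?case using Suc order_trans by (auto simp: s_def)
qed (use assms in simp)

lemma mono_image_Icc:
  fixes G :: "real \<Rightarrow> real"
  assumes "continuous_on {c..d} G" "mono G" "c \<le> d"
  shows "G ` {c..d} = {G c..G d}"
proof
  show "G ` {c..d} \<subseteq> {G c..G d}" using assms(2) by (auto simp: mono_def)
  show "{G c..G d} \<subseteq> G ` {c..d}" using IVT'[of G c _ d] assms(1,3) by fastforce
qed

lemma antimono_image_Icc:
  fixes G :: "real \<Rightarrow> real"
  assumes "continuous_on {c..d} G" "antimono G" "c \<le> d"
  shows "G ` {c..d} = {G d..G c}"
proof
  show "G ` {c..d} \<subseteq> {G d..G c}" using assms(2) by (auto simp: antimono_def)
  show "{G d..G c} \<subseteq> G ` {c..d}" using IVT2'[of G d _ c] assms(1,3) by fastforce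
qed

lemma zero_free_interval_pos:
  fixes \<phi> :: "real \<Rightarrow> real"
  assumes cont: "continuous_on UNIV \<phi>" and no_zero: "\<And>s. q1 < s \<Longrightarrow> s < q2 \<Longrightarrow> \<phi> s \<noteq> 0"
    and a: "q1 < a" "a < q2" "0 < \<phi> a" and t: "q1 < t" "t < q2"
  shows "0 < \<phi> t"
proof (rule ccontr)
  assume "\<not> 0 < \<phi> t"
  have cont': "continuous_on {x..y} \<phi>" for x y using cont by (rule continuous_on_subset) simp
  obtain s where "min t a \<le> s" "s \<le> max t a" "\<phi> s = 0"
  proof (cases "t \<le> a")
    case True
    then show ?thesis using IVT'[of \<phi> t 0 a, OF _ _ _ cont'] \<open>\<not> 0 < \<phi> t\<close> a that by auto
  next
    case False
    then show ?thesis using IVT2'[of \<phi> t 0 a, OF _ _ _ cont'] \<open>\<not> 0 < \<phi> t\<close> a that by auto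
  qed
  then show False using no_zero[of s] a t by auto
qed

lemma nearest_zeros:
  fixes \<phi> :: "real \<Rightarrow> real"
  assumes cont: "continuous_on UNIV \<phi>" and "0 < \<phi> a"
    and l: "\<phi> l = 0" "l \<le> a" and u: "\<phi> u = 0" "a \<le> u"
  obtains q1 q2 where "l \<le> q1" "q1 < a" "a < q2" "q2 \<le> u" "\<phi> q1 = 0" "\<phi> q2 = 0"
    "\<And>t. q1 < t \<Longrightarrow> t < q2 \<Longrightarrow> 0 < \<phi> t"
proof -
  define Z where "Z = {t. \<phi> t = 0}"
  have "closed Z" unfolding Z_def using cont by (intro closed_Collect_eq) auto
  define q1 where "q1 = Sup (Z \<inter> {..a})"
  define q2 where "q2 = Inf (Z \<inter> {a..})"
  have bdd: "bdd_above (Z \<inter> {..a})" "bdd_below (Z \<inter> {a..})" by (auto intro: bdd_belowI)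
  have inZ: "l \<in> Z \<inter> {..a}" "u \<in> Z \<inter> {a..}" using l u by (auto simp: Z_def)
  have "q1 \<in> Z \<inter> {..a}" unfolding q1_def
    using bdd inZ \<open>closed Z\<close> by (intro closed_contains_Sup closed_Int) auto
  moreover have "q2 \<in> Z \<inter> {a..}" unfolding q2_def
    using bdd inZ \<open>closed Z\<close> by (intro closed_contains_Inf closed_Int) auto
  ultimately have q: "\<phi> q1 = 0" "\<phi> q2 = 0" "q1 < a" "a < q2"
    using \<open>0 < \<phi> a\<close> by (auto simp: Z_def order.order_iff_strict)
  have "l \<le> q1" "q2 \<le> u"
    unfolding q1_def q2_def using bdd inZ by (auto intro: cSup_upper cInf_lower)
  have "\<phi> t \<noteq> 0" if "q1 < t" "t < q2" for t
  proof
    assume "\<phi> t = 0"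
    then have "t \<in> Z" by (simp add: Z_def)
    then show False
      using that cSup_upper[OF _ bdd(1), of t] cInf_lower[OF _ bdd(2), of t]
      unfolding q1_def[symmetric] q2_def[symmetric] by (cases "t \<le> a") auto
  qed
  then have "0 < \<phi> t" if "q1 < t" "t < q2" for t
    using zero_free_interval_pos[OF cont _ q(3,4) \<open>0 < \<phi> a\<close> that] by blast
  then show ?thesis using that \<open>l \<le> q1\<close> \<open>q2 \<le> u\<close> q by blast
qed

lemma continuous_at_lower_bound:
  fixes \<phi> :: "real \<Rightarrow> real"
  assumes "continuous (at a) \<phi>" "0 < \<phi> a"
  obtains \<rho> where "\<rho> > 0" "\<And>t. \<bar>t - a\<bar> < \<rho> \<Longrightarrow> \<phi> a / 2 < \<phi> t"
proof -
  obtain \<rho> where "\<rho> > 0" "\<And>t. dist t a < \<rho> \<Longrightarrow> dist (\<phi> t) (\<phi> a) < \<phi> a / 2"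
    using assms unfolding continuous_at_eps_delta by (metis half_gt_zero)
  moreover have "\<phi> a / 2 < \<phi> t" if "dist (\<phi> t) (\<phi> a) < \<phi> a / 2" for t
    using that unfolding dist_real_def abs_less_iff by linarith
  ultimately show ?thesis using that by (simp add: dist_real_def)
qed

section \<open>Arcs of the circle\<close>

lemma cis_eq_iff_int: "cis s = cis t \<longleftrightarrow> (\<exists>k::int. s = t + 2*pi*k)"
proof -
  have "cis s = cis t \<longleftrightarrow> sin s = sin t \<and> cos s = cos t"
    by (auto simp add: complex_eq_iff)
  then show ?thesis by (simp add: sin_cos_eq_iff)
qed

lemma cis_add_2pi_int [simp]: "cis (t + 2*pi * of_int k) = cis t"
  by (metis cis_eq_iff_int)

lemma cis_add_2pi [simp]: "cis (t + 2*pi) = cis t"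
  using cis_add_2pi_int[of t 1] by simp

lemma multiple_2pi_eq_0:
  assumes "- (2*pi) < 2*pi * of_int k" "2*pi * of_int k < 2*pi"
  shows "k = 0"
proof -
  have "0 < 2*pi * (of_int k + 1)" "0 < 2*pi * (1 - of_int k)"
    using assms by (simp_all add: algebra_simps)
  then have "0 < of_int k + (1::real)" "0 < 1 - (of_int k::real)"
    by (simp_all add: zero_less_mult_iff)
  then show ?thesis by linarith
qed

lemma shift_into_period:
  obtains k :: int where "q \<le> x + 2*pi * of_int k" "x + 2*pi * of_int k < q + 2*pi"
proof
  define k where "k = \<lceil>(q - x) / (2*pi)\<rceil>"
  have "(q - x) / (2*pi) \<le> of_int k" "of_int k < (q - x) / (2*pi) + 1"
    unfolding k_def by linarith+
  then show "q \<le> x + 2*pi * of_int k" "x + 2*pi * of_int k < q + 2*pi"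
    by (simp_all add: field_simps)
qed

lemma dist_cis_le: "dist (cis s) (cis t) \<le> \<bar>s - t\<bar>"
proof -
  define x where "x = (s - t) / 2"
  have st: "s - t = 2 * x" by (simp add: x_def)
  have "(dist (cis s) (cis t))\<^sup>2 = (cos s - cos t)\<^sup>2 + (sin s - sin t)\<^sup>2"
    by (simp add: dist_norm cmod_def cis.code)
  also have "\<dots> = 2 - 2 * cos (s - t)"
    using sin_cos_squared_add[of s] sin_cos_squared_add[of t]
    by (simp add: cos_diff power2_eq_square algebra_simps)
  also have "\<dots> = 4 * (sin x)\<^sup>2"
    unfolding st cos_double_sin by simp
  also have "\<dots> \<le> (2 * x)\<^sup>2"
    using abs_sin_x_le_abs_x[of x] by (simp add: abs_le_square_iff[symmetric])
  finally have "(dist (cis s) (cis t))\<^sup>2 \<le> (2 * x)\<^sup>2" .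
  then show ?thesis unfolding st using abs_le_square_iff[of "dist (cis s) (cis t)"] by simp
qed

lemma cis_in_S1 [simp]: "cis t \<in> S1"
  by (simp add: S1_def)

lemma S1_imp_cis:
  assumes "z \<in> S1"
  obtains t where "\<alpha> \<le> t" "t < \<alpha> + 2*pi" "z = cis t"
proof
  define u where "u = Arg2pi (z / cis \<alpha>)"
  have "norm (z / cis \<alpha>) = 1" using assms by (simp add: S1_def norm_divide)
  then have "cis u = z / cis \<alpha>"
    unfolding u_def by (metis Arg2pi_eq cis_conv_exp mult_1 of_real_1)
  then show "z = cis (\<alpha> + u)" by (simp add: cis_mult[symmetric] field_simps)
  show "\<alpha> \<le> \<alpha> + u" "\<alpha> + u < \<alpha> + 2*pi" using Arg2pi unfolding u_def by auto
qed

lemma cis_image_shift: "cis ` {x + 2*pi * of_int k .. y + 2*pi * of_int k} = cis ` {x..y}"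
  unfolding image_add_atLeastAtMost'[symmetric] image_image by simp

lemma cis_notin_arc:
  assumes "d < t" "t < c + 2*pi"
  shows "cis t \<notin> cis ` {c..d}"
proof
  assume "cis t \<in> cis ` {c..d}"
  then obtain s k where s: "c \<le> s" "s \<le> d" and k: "t = s + 2*pi * of_int (k::int)"
    by (auto simp: cis_eq_iff_int)
  then have "k = 0" using assms by (intro multiple_2pi_eq_0) linarith+
  then show False using s k assms by simp
qed

lemma cis_in_arc_iff:
  assumes "c \<le> t" "t < c + 2*pi" "d < c + 2*pi"
  shows "cis t \<in> cis ` {c..d} \<longleftrightarrow> t \<le> d"
  using cis_notin_arc[of d t c] assms by (cases "t \<le> d") auto

lemma arc_eq_imp_endpoints_eq:
  assumes p: "c \<le> p" "p < c + 2*pi" and pq: "p \<le> q" "q < p + 2*pi" and cd: "c \<le> d" "d < c + 2*pi"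
    and eq: "cis ` {p..q} = cis ` {c..d}"
  shows "p = c \<and> q = d"
proof -
  have "cis p \<in> cis ` {c..d}" "cis q \<in> cis ` {c..d}" "cis c \<in> cis ` {p..q}" "cis d \<in> cis ` {p..q}"
    using eq pq cd by auto
  then have "p \<le> d" using cis_in_arc_iff[of c p d] p cd by simp
  have "p = c"
  proof (rule ccontr)
    assume "p \<noteq> c"
    then have "c + 2*pi \<le> q"
      using cis_in_arc_iff[of p "c + 2*pi" q] \<open>cis c \<in> cis ` {p..q}\<close> p pq by simp
    define t where "t = (d + c + 2*pi) / 2"
    have "cis t \<in> cis ` {p..q}" using \<open>p \<le> d\<close> \<open>c + 2*pi \<le> q\<close> cd by (auto simp: t_def)
    moreover have "cis t \<notin> cis ` {c..d}" using cis_in_arc_iff[of c t d] cd by (simp add: t_def)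
    ultimately show False using eq by simp
  qed
  moreover have "q = d"
    using cis_in_arc_iff[of c q d] cis_in_arc_iff[of p d q] \<open>cis q \<in> cis ` {c..d}\<close>
      \<open>cis d \<in> cis ` {p..q}\<close> \<open>p = c\<close> pq cd by simp
  ultimately show ?thesis by simp
qed

lemma arc_endpoints_unique:
  assumes "p \<le> q" "q - p < 2*pi" "c \<le> d" "d - c < 2*pi"
    and eq: "cis ` {p..q} = cis ` {c..d}"
  shows "cis p = cis c \<and> cis q = cis d"
proof -
  obtain k :: int where k: "c \<le> p + 2*pi * of_int k" "p + 2*pi * of_int k < c + 2*pi"
    using shift_into_period .
  have "cis ` {p + 2*pi * of_int k..q + 2*pi * of_int k} = cis ` {c..d}"
    unfolding cis_image_shift eq ..
  then have "p + 2*pi * of_int k = c \<and> q + 2*pi * of_int k = d"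
    using assms k by (intro arc_eq_imp_endpoints_eq) auto
  then show ?thesis by (metis cis_add_2pi_int)
qed

lemma S1_minus_arc:
  assumes "z \<in> S1" "z \<notin> cis ` {\<beta>..\<alpha> + 2*pi}" "\<beta> \<le> \<alpha> + 2*pi"
  shows "z \<in> cis ` {\<alpha><..<\<beta>}"
proof -
  obtain t where t: "\<alpha> \<le> t" "t < \<alpha> + 2*pi" "z = cis t"
    using S1_imp_cis[OF assms(1)] .
  have "cis (\<alpha> + 2*pi) \<in> cis ` {\<beta>..\<alpha> + 2*pi}"
    using assms(3) by (intro imageI) simp
  then have "t \<noteq> \<alpha>" using assms(2) t(3) by auto
  moreover have "t < \<beta>" using assms(2) t by force
  ultimately show ?thesis using t by auto
qed

lemma cis_not_nonpos_Reals: "\<bar>u\<bar> < pi \<Longrightarrow> cis u \<notin> \<real>\<^sub>\<le>\<^sub>0"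
  using sin_zero_pi_iff[of u] by (auto simp: complex_nonpos_Reals_iff)

text \<open>On an open arc of length at most \<open>2*pi\<close> a continuous branch of the argument
  identifies the arc with a real interval.\<close>
lemma connected_subset_open_arc:
  assumes "\<alpha> < \<beta>" "\<beta> \<le> \<alpha> + 2*pi" and K: "K \<subseteq> cis ` {\<alpha><..<\<beta>}" "K \<noteq> {}" "compact K" "connected K"
  obtains c d where "\<alpha> < c" "c \<le> d" "d < \<beta>" "K = cis ` {c..d}"
proof -
  define \<gamma> where "\<gamma> = \<alpha> + pi"
  define \<psi> where "\<psi> z = \<gamma> + Arg (z / cis \<gamma>)" for z
  have \<psi>: "\<psi> (cis t) = t" "cis t / cis \<gamma> \<notin> \<real>\<^sub>\<le>\<^sub>0" if "t \<in> {\<alpha><..<\<beta>}" for t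
  proof -
    have "cis t / cis \<gamma> = cis (t - \<gamma>)" by (simp add: cis_divide)
    moreover have "t - \<gamma> \<in> {-pi<..pi}" "\<bar>t - \<gamma>\<bar> < pi" using that assms unfolding \<gamma>_def by auto
    ultimately show "\<psi> (cis t) = t" "cis t / cis \<gamma> \<notin> \<real>\<^sub>\<le>\<^sub>0"
      unfolding \<psi>_def using Arg_cis cis_not_nonpos_Reals by auto
  qed
  have cont: "continuous_on K \<psi>"
  proof (rule continuous_at_imp_continuous_on, rule ballI)
    fix z assume "z \<in> K"
    then obtain t where t: "t \<in> {\<alpha><..<\<beta>}" "z = cis t" using K(1) by blast
    have "continuous (at (z / cis \<gamma>)) Arg" using \<psi>(2)[OF t(1)] t continuous_at_Arg by simp
    moreover have "continuous (at z) (\<lambda>w. w / cis \<gamma>)" by (intro continuous_intros) simp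
    ultimately have "continuous (at z) (\<lambda>w. Arg (w / cis \<gamma>))"
      using continuous_at_compose[of z "\<lambda>w. w / cis \<gamma>" Arg] by (simp add: o_def)
    then show "continuous (at z) \<psi>" unfolding \<psi>_def by (intro continuous_intros)
  qed
  have "connected (\<psi> ` K) \<and> compact (\<psi> ` K)"
    using compact_continuous_image[OF cont K(3)] connected_continuous_image[OF cont K(4)] by blast
  then obtain c d where cd: "\<psi> ` K = {c..d}"
    unfolding connected_compact_interval_1 by blast
  have \<psi>K: "\<psi> z \<in> {\<alpha><..<\<beta>}" "cis (\<psi> z) = z" if "z \<in> K" for z
    using that K(1) \<psi>(1) by auto
  then have sub: "\<psi> ` K \<subseteq> {\<alpha><..<\<beta>}" by blast
  have inv: "cis ` (\<psi> ` K) = K"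
    using \<psi>K(2) by (simp add: image_image)
  have "c \<le> d" using cd K(2) by (metis atLeastatMost_empty_iff2 image_is_empty)
  then have "\<alpha> < c" "d < \<beta>" using sub cd by auto
  moreover have "K = cis ` {c..d}" using inv cd by simp
  ultimately show ?thesis using that \<open>c \<le> d\<close> by blast
qed

lemma hyperspace_C_arc:
  assumes "A \<in> hyperspace_C" "A \<noteq> S1"
  obtains c d where "c \<le> d" "d < c + 2*pi" "A = cis ` {c..d}"
proof -
  have A: "A \<subseteq> S1" "A \<noteq> {}" "compact A" "connected A" using assms by (auto simp: hyperspace_C_def)
  then obtain z where "z \<in> S1" "z \<notin> A" using assms(2) by blast
  then obtain \<alpha> where "cis \<alpha> \<notin> A" using S1_imp_cis by metis
  then have sub: "A \<subseteq> cis ` {\<alpha><..<\<alpha> + 2*pi}"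
    using S1_minus_arc[of _ "\<alpha> + 2*pi" \<alpha>] A(1) by auto
  have "\<alpha> < \<alpha> + 2*pi" "\<alpha> + 2*pi \<le> \<alpha> + 2*pi" by simp_all
  then obtain c d where "\<alpha> < c" "c \<le> d" "d < \<alpha> + 2*pi" "A = cis ` {c..d}"
    using connected_subset_open_arc[OF _ _ sub A(2-4)] by blast
  then show ?thesis using that by simp
qed

lemma compact_arc: "compact (cis ` {x..y})"
  by (intro compact_continuous_image continuous_intros) simp

lemma cis_image_in_hyperspace_C:
  fixes G :: "real \<Rightarrow> real"
  assumes "continuous_on UNIV G" "c \<le> d"
  shows "cis ` (G ` {c..d}) \<in> hyperspace_C"
proof -
  have cont: "continuous_on {c..d} (cis \<circ> G)"
    by (intro continuous_on_compose continuous_on_subset[OF assms(1)] continuous_intros) auto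
  have "compact ((cis \<circ> G) ` {c..d})" "connected ((cis \<circ> G) ` {c..d})"
    using compact_continuous_image[OF cont] connected_continuous_image[OF cont] by auto
  moreover have "(cis \<circ> G) ` {c..d} \<noteq> {}" using assms(2) by simp
  ultimately show ?thesis unfolding hyperspace_C_def image_comp by auto
qed

lemma S1_in_hyperspace_C: "S1 \<in> hyperspace_C"
proof -
  have "connected S1" unfolding S1_def by (rule connected_sphere) simp
  then show ?thesis using cis_in_S1[of 0] unfolding hyperspace_C_def by (auto simp: S1_def)
qed

section \<open>Hausdorff distance\<close>

lemma hausdorff_dist_self: "A \<noteq> {} \<Longrightarrow> hausdorff_dist A A = 0"
  by (simp add: hausdorff_dist_def cong: SUP_cong)

lemma hausdorff_dist_commute: "hausdorff_dist A B = hausdorff_dist B A"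
  by (simp add: hausdorff_dist_def max.commute)

lemma infdist_less_hausdorff_dist:
  assumes "bounded A" "B \<noteq> {}" "hausdorff_dist A B < e" "x \<in> A"
  shows "infdist x B < e"
proof -
  obtain b where b: "b \<in> B" using assms(2) by blast
  obtain r where r: "\<And>a. a \<in> A \<Longrightarrow> norm a \<le> r" using assms(1) by (auto simp: bounded_iff)
  have "infdist a B \<le> r + norm b" if "a \<in> A" for a
    using infdist_le[OF b, of a] norm_triangle_ineq4[of a b] r[OF that] by (simp add: dist_norm)
  then have "infdist x B \<le> (SUP a\<in>A. infdist a B)"
    using assms(4) by (intro cSUP_upper bdd_aboveI2) auto
  then show ?thesis using assms(3) unfolding hausdorff_dist_def by linarith
qed

lemma hausdorff_dist_less_imp_subset_open:
  assumes "compact A" "A \<noteq> {}" "open U" "A \<subseteq> U"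
  obtains e where "e > 0" "\<And>B. bounded B \<Longrightarrow> hausdorff_dist A B < e \<Longrightarrow> B \<subseteq> U"
proof -
  obtain e where "e > 0" and e: "{x. infdist x A \<le> e} \<subseteq> U"
    using compact_in_open_separated[OF assms(2,1,3,4)] .
  have "B \<subseteq> U" if "bounded B" "hausdorff_dist A B < e" for B
  proof
    fix y assume "y \<in> B"
    then have "infdist y A < e"
      using that assms(2) by (intro infdist_less_hausdorff_dist) (auto simp: hausdorff_dist_commute)
    then show "y \<in> U" using e by auto
  qed
  then show ?thesis using that \<open>e > 0\<close> by blast
qed

lemma hausdorff_dist_less_imp_not_subset:
  assumes "bounded A" "x \<in> A" "closed W" "W \<noteq> {}" "x \<notin> W"
  obtains e where "e > 0" "\<And>B. B \<noteq> {} \<Longrightarrow> hausdorff_dist A B < e \<Longrightarrow> \<not> B \<subseteq> W"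
proof
  show "infdist x W > 0" using assms(3-5) by (rule infdist_pos_not_in_closed)
  fix B assume "B \<noteq> {}" "hausdorff_dist A B < infdist x W"
  then have "infdist x B < infdist x W" using assms(1,2) by (intro infdist_less_hausdorff_dist)
  then show "\<not> B \<subseteq> W" using infdist_mono[of B W x] \<open>B \<noteq> {}\<close> by linarith
qed

lemma hausdorff_near_arc_subset:
  assumes "a \<le> b" "0 < r" "b - a + 2 * r < 2*pi"
  obtains e where "e > 0"
    "\<And>B. B \<subseteq> S1 \<Longrightarrow> bounded B \<Longrightarrow> hausdorff_dist (cis ` {a..b}) B < e \<Longrightarrow> B \<subseteq> cis ` {a - r<..<b + r}"
proof -
  define K where "K = cis ` {b + r..a - r + 2*pi}"
  have "cis (t + 2*pi) \<notin> K" if "t \<in> {a..b}" for t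
    unfolding K_def using that assms by (intro cis_notin_arc) auto
  then have sub: "cis ` {a..b} \<subseteq> - K" by auto
  have "open (- K)" unfolding K_def using compact_arc by (intro open_Compl compact_imp_closed)
  moreover have "cis ` {a..b} \<noteq> {}" using assms by simp
  ultimately obtain e where "e > 0" and e: "\<And>B. bounded B \<Longrightarrow> hausdorff_dist (cis ` {a..b}) B < e \<Longrightarrow> B \<subseteq> - K"
    using hausdorff_dist_less_imp_subset_open[OF compact_arc _ _ sub] by blast
  have "B \<subseteq> cis ` {a - r<..<b + r}" if "B \<subseteq> S1" "bounded B" "hausdorff_dist (cis ` {a..b}) B < e" for B
    using e[OF that(2,3)] that(1) S1_minus_arc[of _ "b + r" "a - r"] assms unfolding K_def by force
  then show ?thesis using that \<open>e > 0\<close> by blast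
qed

lemma hausdorff_near_arc:
  assumes ab: "a \<le> b" "b < a + 2*pi" and "\<delta> > 0"
  obtains e where "e > 0"
    "\<And>B. B \<in> hyperspace_C \<Longrightarrow> hausdorff_dist (cis ` {a..b}) B < e \<Longrightarrow>
       \<exists>c d. c \<le> d \<and> d - c < 2*pi \<and> \<bar>c - a\<bar> < \<delta> \<and> \<bar>d - b\<bar> < \<delta> \<and> B = cis ` {c..d}"
proof -
  define A where "A = cis ` {a..b}"
  define r where "r = min \<delta> ((2*pi - (b - a)) / 3)"
  have r: "0 < r" "r \<le> \<delta>" "3 * r \<le> 2*pi - (b - a)"
    using assms unfolding r_def by (auto simp: min_def)
  have A: "bounded A" "cis a \<in> A" "cis b \<in> A"
    unfolding A_def using ab compact_arc compact_imp_bounded by auto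
  note closed_arc = compact_arc[THEN compact_imp_closed]
  obtain e1 where "e1 > 0" and e1: "\<And>B. B \<subseteq> S1 \<Longrightarrow> bounded B \<Longrightarrow> hausdorff_dist A B < e1 \<Longrightarrow>
      B \<subseteq> cis ` {a - r<..<b + r}"
    using hausdorff_near_arc_subset[of a b r] ab r unfolding A_def by auto
  have "cis (a + 2*pi) \<notin> cis ` {a + r..b + r}" using r ab by (intro cis_notin_arc) auto
  then have a_notin: "cis a \<notin> cis ` {a + r..b + r}" by simp
  have ne_right: "cis ` {a + r..b + r} \<noteq> {}" using ab by simp
  obtain e2 where "e2 > 0"
    and e2: "\<And>B. B \<noteq> {} \<Longrightarrow> hausdorff_dist A B < e2 \<Longrightarrow> \<not> B \<subseteq> cis ` {a + r..b + r}"
    using hausdorff_dist_less_imp_not_subset[OF A(1,2) closed_arc ne_right a_notin] by blast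
  have b_notin: "cis b \<notin> cis ` {a - r..b - r}" using r ab by (intro cis_notin_arc) auto
  have ne_left: "cis ` {a - r..b - r} \<noteq> {}" using ab by simp
  obtain e3 where "e3 > 0"
    and e3: "\<And>B. B \<noteq> {} \<Longrightarrow> hausdorff_dist A B < e3 \<Longrightarrow> \<not> B \<subseteq> cis ` {a - r..b - r}"
    using hausdorff_dist_less_imp_not_subset[OF A(1,3) closed_arc ne_left b_notin] by blast
  show ?thesis
  proof (rule that[of "min e1 (min e2 e3)"])
    show "min e1 (min e2 e3) > 0" using \<open>e1 > 0\<close> \<open>e2 > 0\<close> \<open>e3 > 0\<close> by simp
    fix B assume "B \<in> hyperspace_C" and AB: "hausdorff_dist (cis ` {a..b}) B < min e1 (min e2 e3)"
    then have B: "B \<subseteq> S1" "B \<noteq> {}" "compact B" "connected B" "bounded B"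
      by (auto simp: hyperspace_C_def compact_imp_bounded)
    have "B \<subseteq> cis ` {a - r<..<b + r}" using e1[OF B(1,5)] AB unfolding A_def by simp
    moreover have "a - r < b + r" "b + r \<le> a - r + 2*pi" using r ab by auto
    ultimately obtain c d where cd: "a - r < c" "c \<le> d" "d < b + r" "B = cis ` {c..d}"
      using connected_subset_open_arc[of "a - r" "b + r" B] B by blast
    have "\<not> a + r \<le> c" using e2[OF B(2)] AB cd unfolding A_def by auto
    moreover have "\<not> d \<le> b - r" using e3[OF B(2)] AB cd unfolding A_def by auto
    ultimately show "\<exists>c d. c \<le> d \<and> d - c < 2*pi \<and> \<bar>c - a\<bar> < \<delta> \<and> \<bar>d - b\<bar> < \<delta> \<and> B = cis ` {c..d}"
      using cd r by (intro exI[of _ c] exI[of _ d]) auto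
  qed
qed

section \<open>Nonwandering points\<close>

lemma periodic_point_in_nonwandering_set:
  assumes "x \<in> X" "n > 0" "(g ^^ n) x = x" "d x x = 0"
  shows "x \<in> nonwandering_set d X g"
  using assms unfolding nonwandering_set_def by (auto intro!: bexI[of _ x] exI[of _ n])

lemma funpow_induced_map: "(induced_map f ^^ n) A = (f ^^ n) ` A"
  by (induction n arbitrary: A) (auto simp: induced_map_def image_comp)

lemma periodic_point_in_nonwandering_hyperspace:
  assumes "A \<in> hyperspace_C" "n > 0" "(induced_map f ^^ n) A = A"
  shows "A \<in> nonwandering_set hausdorff_dist hyperspace_C (induced_map f)"
  using assms hausdorff_dist_self[of A]
  by (intro periodic_point_in_nonwandering_set) (auto simp: hyperspace_C_def)

lemma S1_in_nonwandering_hyperspace: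
  "f ` S1 = S1 \<Longrightarrow> S1 \<in> nonwandering_set hausdorff_dist hyperspace_C (induced_map f)"
  using periodic_point_in_nonwandering_hyperspace[OF S1_in_hyperspace_C, of 1 f]
  by (simp add: induced_map_def)

lemma funpow_circle_lift: "circle_lift f F \<Longrightarrow> (f ^^ n) (cis t) = cis ((F ^^ n) t)"
  by (induction n arbitrary: t) (auto simp: circle_lift_def)

lemma funpow_induced_map_cis_image:
  "circle_lift f F \<Longrightarrow> (induced_map f ^^ n) (cis ` X) = cis ` ((F ^^ n) ` X)"
  by (simp add: funpow_induced_map image_image funpow_circle_lift)

lemma cis_in_nonwandering_setI:
  assumes "\<And>\<epsilon>. \<epsilon> > 0 \<Longrightarrow>
    \<exists>n s s'. n \<ge> 1 \<and> \<bar>s - a\<bar> < \<epsilon> \<and> \<bar>s' - a\<bar> < \<epsilon> \<and> (f ^^ n) (cis s) = cis s'"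
  shows "cis a \<in> nonwandering_set dist S1 f"
  unfolding nonwandering_set_def
proof (intro CollectI conjI allI impI)
  fix \<epsilon> :: real assume "\<epsilon> > 0"
  then obtain n s s' where "n \<ge> 1" "\<bar>s - a\<bar> < \<epsilon>" "\<bar>s' - a\<bar> < \<epsilon>" "(f ^^ n) (cis s) = cis s'"
    using assms by blast
  then show "\<exists>y\<in>S1. \<exists>n\<ge>1. dist (cis a) y < \<epsilon> \<and> dist (cis a) ((f ^^ n) y) < \<epsilon>"
    using dist_cis_le[of a s] dist_cis_le[of a s']
    by (intro bexI[of _ "cis s"] exI[of _ n]) (auto simp: abs_minus_commute)
qed simp

lemma nonwandering_arc_returns:
  assumes L: "circle_lift f F" and C: "continuous_on UNIV F"
    and ab: "a \<le> b" "b < a + 2*pi"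
    and NW: "cis ` {a..b} \<in> nonwandering_set hausdorff_dist hyperspace_C (induced_map f)"
    and "\<delta> > 0"
  obtains n c d c' d' where "n \<ge> 1" "\<bar>c - a\<bar> < \<delta>" "\<bar>d - b\<bar> < \<delta>" "\<bar>c' - a\<bar> < \<delta>" "\<bar>d' - b\<bar> < \<delta>"
    "c \<le> d" "d - c < 2*pi" "c' \<le> d'" "d' - c' < 2*pi" "cis ` ((F ^^ n) ` {c..d}) = cis ` {c'..d'}"
proof -
  obtain e where "e > 0" and near: "\<And>B. B \<in> hyperspace_C \<Longrightarrow> hausdorff_dist (cis ` {a..b}) B < e \<Longrightarrow>
       \<exists>c d. c \<le> d \<and> d - c < 2*pi \<and> \<bar>c - a\<bar> < \<delta> \<and> \<bar>d - b\<bar> < \<delta> \<and> B = cis ` {c..d}"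
    using hausdorff_near_arc[OF ab \<open>\<delta> > 0\<close>] by blast
  obtain B n where B: "B \<in> hyperspace_C" "n \<ge> 1" "hausdorff_dist (cis ` {a..b}) B < e"
    "hausdorff_dist (cis ` {a..b}) ((induced_map f ^^ n) B) < e"
    using NW \<open>e > 0\<close> unfolding nonwandering_set_def by blast
  obtain c d where cd: "c \<le> d" "d - c < 2*pi" "\<bar>c - a\<bar> < \<delta>" "\<bar>d - b\<bar> < \<delta>" "B = cis ` {c..d}"
    using near[OF B(1,3)] by blast
  have image: "(induced_map f ^^ n) B = cis ` ((F ^^ n) ` {c..d})"
    unfolding cd(5) by (rule funpow_induced_map_cis_image[OF L])
  have "continuous_on UNIV (F ^^ n)"
    by (induction n) (auto intro: continuous_on_compose2[OF C])
  then have "(induced_map f ^^ n) B \<in> hyperspace_C"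
    unfolding image using cd(1) by (rule cis_image_in_hyperspace_C)
  then obtain c' d' where "c' \<le> d'" "d' - c' < 2*pi" "\<bar>c' - a\<bar> < \<delta>" "\<bar>d' - b\<bar> < \<delta>"
      "cis ` ((F ^^ n) ` {c..d}) = cis ` {c'..d'}"
    using near B(4) image by metis
  then show ?thesis using that cd B(2) by blast
qed

section \<open>Lifts of degree one and minus one\<close>

definition deg1_lift :: "(real \<Rightarrow> real) \<Rightarrow> bool" where
  "deg1_lift G \<longleftrightarrow> continuous_on UNIV G \<and> strict_mono G \<and> (\<forall>t. G (t + 2*pi) = G t + 2*pi)"

definition degm1_lift :: "(real \<Rightarrow> real) \<Rightarrow> bool" where
  "degm1_lift G \<longleftrightarrow> continuous_on UNIV G \<and> (\<forall>s t. s < t \<longrightarrow> G t < G s) \<and>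
     (\<forall>t. G (t + 2*pi) = G t - 2*pi)"

lemma shift_2pi_int:
  fixes G :: "real \<Rightarrow> real"
  assumes "\<And>t. G (t + 2*pi) = G t + c"
  shows "G (t + 2*pi * of_int k) = G t + c * of_int k"
proof -
  have nat: "G (t + 2*pi * real n) = G t + c * real n" for t n
  proof (induction n)
    case (Suc n)
    have "G (t + 2*pi * real (Suc n)) = G ((t + 2*pi * real n) + 2*pi)"
      by (rule arg_cong[where f = G]) (simp add: algebra_simps)
    also have "\<dots> = G (t + 2*pi * real n) + c" by (rule assms)
    also have "\<dots> = G t + c * real (Suc n)" using Suc.IH by (simp add: algebra_simps)
    finally show ?case .
  qed simp
  show ?thesis
  proof (cases "k \<ge> 0")
    case True
    then show ?thesis using nat[of t "nat k"] by simp
  next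
    case False
    define n where "n = nat (- k)"
    have k: "of_int k = - real n" using False by (simp add: n_def)
    have "G ((t + 2*pi * of_int k) + 2*pi * real n) = G (t + 2*pi * of_int k) + c * real n"
      by (rule nat)
    then show ?thesis unfolding k by simp
  qed
qed

lemma deg1_lift_shift: "deg1_lift G \<Longrightarrow> G (t + 2*pi * of_int k) = G t + 2*pi * of_int k"
  using shift_2pi_int[of G "2*pi"] by (simp add: deg1_lift_def)

lemma degm1_lift_shift: "degm1_lift G \<Longrightarrow> G (t + 2*pi * of_int k) = G t - 2*pi * of_int k"
  using shift_2pi_int[of G "- 2*pi"] by (simp add: degm1_lift_def)

lemma deg1_lift_comp: "deg1_lift G \<Longrightarrow> deg1_lift H \<Longrightarrow> deg1_lift (G \<circ> H)"
  unfolding deg1_lift_def using continuous_on_UNIV_comp by (auto simp: strict_mono_def)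

lemma degm1_lift_comp_deg1: "degm1_lift G \<Longrightarrow> deg1_lift H \<Longrightarrow> degm1_lift (G \<circ> H)"
  unfolding deg1_lift_def degm1_lift_def using continuous_on_UNIV_comp by (auto simp: strict_mono_def)

lemma degm1_lift_comp: "degm1_lift G \<Longrightarrow> degm1_lift H \<Longrightarrow> deg1_lift (G \<circ> H)"
  using degm1_lift_shift[of G _ "-1"] continuous_on_UNIV_comp
  unfolding deg1_lift_def degm1_lift_def by (auto simp: strict_mono_def)

lemma deg1_lift_id: "deg1_lift id"
  by (auto simp: deg1_lift_def strict_mono_def)

lemma deg1_lift_funpow: "deg1_lift G \<Longrightarrow> deg1_lift (G ^^ n)"
  by (induction n) (simp_all add: deg1_lift_id deg1_lift_comp)

lemma degm1_lift_funpow: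
  assumes "degm1_lift G"
  shows "(even n \<longrightarrow> deg1_lift (G ^^ n)) \<and> (odd n \<longrightarrow> degm1_lift (G ^^ n))"
proof (induction n)
  case (Suc n)
  then show ?case
    using assms degm1_lift_comp[of G "G ^^ n"] degm1_lift_comp_deg1[of G "G ^^ n"]
    by (auto simp: comp_def)
qed (auto simp: deg1_lift_def strict_mono_def)

lemma deg1_lift_image:
  assumes "deg1_lift G" "c \<le> d" "d - c < 2*pi"
  shows "G ` {c..d} = {G c..G d}" "G c \<le> G d" "G d - G c < 2*pi"
proof -
  have mono: "strict_mono G" and cont: "continuous_on {c..d} G"
    using assms(1) continuous_on_subset by (auto simp: deg1_lift_def)
  show "G c \<le> G d" using mono assms(2) by (simp add: strict_mono_less_eq)
  have "G d < G (c + 2*pi)" using mono assms(3) by (simp add: strict_mono_less)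
  then show "G d - G c < 2*pi" using assms(1) by (simp add: deg1_lift_def)
  show "G ` {c..d} = {G c..G d}"
    using mono_image_Icc[OF cont strict_mono_mono[OF mono] assms(2)] .
qed

lemma degm1_lift_image:
  assumes "degm1_lift G" "c \<le> d" "d - c < 2*pi"
  shows "G ` {c..d} = {G d..G c}" "G d \<le> G c" "G c - G d < 2*pi"
proof -
  have anti: "\<And>s t. s < t \<Longrightarrow> G t < G s" and cont: "continuous_on {c..d} G"
    using assms(1) continuous_on_subset by (auto simp: degm1_lift_def)
  then have "antimono G" by (metis antimonoI order_le_less)
  then show "G d \<le> G c" using assms(2) by (simp add: antimono_def)
  have "G (c + 2*pi) < G d" using anti assms(3) by simp
  then show "G c - G d < 2*pi" using assms(1) by (simp add: degm1_lift_def)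
  show "G ` {c..d} = {G d..G c}"
    using antimono_image_Icc[OF cont \<open>antimono G\<close> assms(2)] .
qed

lemma deg1_lift_arc_endpoints:
  assumes "deg1_lift G" "c \<le> d" "d - c < 2*pi" "c' \<le> d'" "d' - c' < 2*pi"
    and "cis ` (G ` {c..d}) = cis ` {c'..d'}"
  shows "cis (G c) = cis c' \<and> cis (G d) = cis d'"
  using deg1_lift_image[OF assms(1-3)] assms(4-6) by (intro arc_endpoints_unique) auto

lemma degm1_lift_arc_endpoints:
  assumes "degm1_lift G" "c \<le> d" "d - c < 2*pi" "c' \<le> d'" "d' - c' < 2*pi"
    and "cis ` (G ` {c..d}) = cis ` {c'..d'}"
  shows "cis (G d) = cis c' \<and> cis (G c) = cis d'"
  using degm1_lift_image[OF assms(1-3)] assms(4-6) by (intro arc_endpoints_unique) auto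

lemma deg1_lift_fixes_arc:
  assumes "deg1_lift G" "a \<le> b" "b < a + 2*pi" "cis (G a) = cis a" "cis (G b) = cis b"
  shows "cis ` (G ` {a..b}) = cis ` {a..b}"
proof -
  obtain k k' :: int where k: "G a = a + 2*pi * of_int k" and k': "G b = b + 2*pi * of_int k'"
    using assms(4,5) cis_eq_iff_int by metis
  have im: "G ` {a..b} = {G a..G b}" "G a \<le> G b" "G b - G a < 2*pi"
    using deg1_lift_image[OF assms(1,2)] assms(3) by auto
  then have "k' - k = 0" using k k' assms(2,3) by (intro multiple_2pi_eq_0) (auto simp: algebra_simps)
  then have "G ` {a..b} = {a + 2*pi * of_int k..b + 2*pi * of_int k}" using im(1) k k' by simp
  then show ?thesis by (simp add: cis_image_shift)
qed

lemma circle_lift_period: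
  assumes L: "circle_lift f F" and C: "continuous_on UNIV F"
  shows "\<exists>k::int. \<forall>t. F (t + 2*pi) = F t + 2*pi * of_int k"
proof -
  define g where "g t = (F (t + 2*pi) - F t) / (2*pi)" for t
  have g_Ints: "g t \<in> \<int>" for t
  proof -
    have "cis (F (t + 2*pi)) = cis (F t)"
      using L unfolding circle_lift_def by (metis cis_add_2pi)
    then obtain k :: int where "F (t + 2*pi) = F t + 2*pi * of_int k"
      using cis_eq_iff_int by blast
    then show ?thesis unfolding g_def by simp
  qed
  have "continuous_on UNIV g"
    unfolding g_def by (intro continuous_intros continuous_on_compose2[OF C]) auto
  then have "g constant_on UNIV"
  proof (rule continuous_discrete_range_constant[OF connected_UNIV])
    show "\<exists>e>0. \<forall>y. y \<in> UNIV \<and> g y \<noteq> g x \<longrightarrow> e \<le> norm (g y - g x)" for x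
      using g_Ints by (intro exI[of _ 1]) (auto intro: Ints_nonzero_abs_ge1)
  qed
  moreover obtain k :: int where "g 0 = of_int k" using g_Ints by (auto elim: Ints_cases)
  ultimately have "g t = of_int k" for t by (metis constant_on_def UNIV_I)
  then show ?thesis unfolding g_def by (intro exI[of _ k]) (simp add: field_simps)
qed

text \<open>A lift of degree \<open>k\<close> with \<open>\<bar>k\<bar> \<ge> 2\<close> takes the value \<open>F 0 \<plusminus> 2*pi\<close> inside
  \<open>]0, 2*pi[\<close>, so the circle map would identify two points.\<close>
lemma injective_circle_lift_degree:
  assumes L: "circle_lift f F" and C: "continuous_on UNIV F" and I: "inj_on f S1"
    and k: "\<forall>t. F (t + 2*pi) = F t + 2*pi * of_int k"
  shows "\<bar>k\<bar> \<le> 1"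
proof (rule ccontr)
  assume "\<not> \<bar>k\<bar> \<le> 1"
  have F2: "F (2*pi) = F 0 + 2*pi * of_int k" using k[rule_format, of 0] by simp
  have cont: "continuous_on {0..2*pi} F" using C by (rule continuous_on_subset) simp
  obtain s j where s: "0 < s" "s < 2*pi" "F s = F 0 + 2*pi * of_int (j::int)"
  proof (cases "k \<ge> 2")
    case True
    then have "2*pi * 2 \<le> 2*pi * of_int k" by (intro mult_left_mono) auto
    moreover obtain s where "0 \<le> s" "s \<le> 2*pi" "F s = F 0 + 2*pi"
      using IVT'[of F 0 "F 0 + 2*pi" "2*pi", OF _ _ _ cont] F2 calculation by auto
    ultimately show ?thesis using that[of s 1] F2 by (cases "s = 0 \<or> s = 2*pi") auto
  next
    case False
    then have "k \<le> -2" using \<open>\<not> \<bar>k\<bar> \<le> 1\<close> by linarith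
    then have "2*pi * of_int k \<le> 2*pi * (-2)" by (intro mult_left_mono) auto
    moreover obtain s where "0 \<le> s" "s \<le> 2*pi" "F s = F 0 - 2*pi"
      using IVT2'[of F "2*pi" "F 0 - 2*pi" 0, OF _ _ _ cont] F2 calculation by auto
    ultimately show ?thesis using that[of s "-1"] F2 by (cases "s = 0 \<or> s = 2*pi") auto
  qed
  have "f (cis s) = f (cis 0)"
    using L s(3) unfolding circle_lift_def by (metis cis_add_2pi_int)
  then have "cis s = cis 0" using inj_onD[OF I] cis_in_S1 by blast
  moreover have "cis s \<notin> cis ` {0..0}" using s by (intro cis_notin_arc) auto
  ultimately show False by simp
qed

lemma orientation_preserving_deg1_lift:
  assumes "orientation_preserving f" "inj_on f S1"
  obtains F where "circle_lift f F" "deg1_lift F"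
proof -
  obtain F where L: "circle_lift f F" and C: "continuous_on UNIV F" and M: "strict_mono F"
    using assms(1) unfolding orientation_preserving_def by blast
  obtain k :: int where k: "\<forall>t. F (t + 2*pi) = F t + 2*pi * of_int k"
    using circle_lift_period[OF L C] by blast
  have "F 0 < F (0 + 2*pi)" using M by (simp add: strict_mono_less)
  then have "0 < 2*pi * of_int k" using k[rule_format, of 0] by simp
  then have "0 < k" by (simp add: zero_less_mult_iff)
  then have "k = 1" using injective_circle_lift_degree[OF L C assms(2) k] by simp
  then show ?thesis using that L C M k by (simp add: deg1_lift_def)
qed

lemma orientation_reversing_degm1_lift:
  assumes "orientation_reversing f" "inj_on f S1"
  obtains F where "circle_lift f F" "degm1_lift F"
proof -
  obtain F where L: "circle_lift f F" and C: "continuous_on UNIV F"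
    and M: "\<forall>s t. s < t \<longrightarrow> F t < F s"
    using assms(1) unfolding orientation_reversing_def by blast
  obtain k :: int where k: "\<forall>t. F (t + 2*pi) = F t + 2*pi * of_int k"
    using circle_lift_period[OF L C] by blast
  have "F (0 + 2*pi) < F 0" using M by simp
  then have "2*pi * of_int k < 0" using k[rule_format, of 0] by simp
  then have "k < 0" by (simp add: mult_less_0_iff)
  then have "k = -1" using injective_circle_lift_degree[OF L C assms(2) k] by simp
  then show ?thesis using that L C M k by (simp add: degm1_lift_def)
qed

lemma deg1_lift_funpow_arc_fixed_iff:
  assumes L: "circle_lift f F" and D: "deg1_lift (F ^^ j)" and ab: "a \<le> b" "b < a + 2*pi"
  shows "(induced_map f ^^ j) (cis ` {a..b}) = cis ` {a..b} \<longleftrightarrow>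
           (f ^^ j) (cis a) = cis a \<and> (f ^^ j) (cis b) = cis b"
  using deg1_lift_arc_endpoints[OF D ab(1) _ ab(1)] deg1_lift_fixes_arc[OF D ab] ab
  by (auto simp: funpow_induced_map_cis_image[OF L] funpow_circle_lift[OF L])

section \<open>Orientation preserving maps\<close>

lemma nonwandering_arc_endpoints_deg1:
  assumes L: "circle_lift f F" and D: "deg1_lift F" and ab: "a \<le> b" "b < a + 2*pi"
    and NW: "cis ` {a..b} \<in> nonwandering_set hausdorff_dist hyperspace_C (induced_map f)"
  shows "cis a \<in> nonwandering_set dist S1 f \<and> cis b \<in> nonwandering_set dist S1 f"
proof -
  have C: "continuous_on UNIV F" using D by (simp add: deg1_lift_def)
  have "\<exists>n c d c' d'. n \<ge> 1 \<and> \<bar>c - a\<bar> < \<epsilon> \<and> \<bar>d - b\<bar> < \<epsilon> \<and> \<bar>c' - a\<bar> < \<epsilon> \<and> \<bar>d' - b\<bar> < \<epsilon>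
      \<and> (f ^^ n) (cis c) = cis c' \<and> (f ^^ n) (cis d) = cis d'" if eps: "\<epsilon> > 0" for \<epsilon>
  proof -
    obtain n c d c' d' where nd: "n \<ge> 1" "\<bar>c - a\<bar> < \<epsilon>" "\<bar>d - b\<bar> < \<epsilon>" "\<bar>c' - a\<bar> < \<epsilon>" "\<bar>d' - b\<bar> < \<epsilon>"
      "c \<le> d" "d - c < 2*pi" "c' \<le> d'" "d' - c' < 2*pi" "cis ` ((F ^^ n) ` {c..d}) = cis ` {c'..d'}"
      using nonwandering_arc_returns[OF L C ab NW eps] by blast
    have "cis ((F ^^ n) c) = cis c' \<and> cis ((F ^^ n) d) = cis d'"
      using deg1_lift_arc_endpoints[OF deg1_lift_funpow[OF D] nd(6-10)] .
    then show ?thesis using nd(1-5) funpow_circle_lift[OF L] by metis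
  qed
  then show ?thesis by (metis cis_in_nonwandering_setI)
qed

theorem nonwandering_hyperspace_orientation_preserving:
  assumes MS: "morse_smale f" and OP: "orientation_preserving f"
    and per: "\<forall>p \<in> periodic_points S1 f. p \<in> per_points S1 f N"
  shows "nonwandering_set hausdorff_dist hyperspace_C (induced_map f) =
           per_points hyperspace_C (induced_map f) N \<union> {S1}"
proof
  have diffeo: "f ` S1 = S1" "inj_on f S1"
    and NW_per: "nonwandering_set dist S1 f \<subseteq> periodic_points S1 f"
    using MS by (auto simp: morse_smale_def circle_C1_diffeo_def)
  obtain F where L: "circle_lift f F" and D: "deg1_lift F"
    using orientation_preserving_deg1_lift[OF OP diffeo(2)] .
  show "nonwandering_set hausdorff_dist hyperspace_C (induced_map f) \<subseteq>
          per_points hyperspace_C (induced_map f) N \<union> {S1}"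
  proof
    fix A assume NW: "A \<in> nonwandering_set hausdorff_dist hyperspace_C (induced_map f)"
    then have AC: "A \<in> hyperspace_C" by (simp add: nonwandering_set_def)
    show "A \<in> per_points hyperspace_C (induced_map f) N \<union> {S1}"
    proof (cases "A = S1")
      case False
      then obtain a b where ab: "a \<le> b" "b < a + 2*pi" and A: "A = cis ` {a..b}"
        using hyperspace_C_arc[OF AC] by blast
      have "cis a \<in> per_points S1 f N" "cis b \<in> per_points S1 f N"
        using nonwandering_arc_endpoints_deg1[OF L D ab NW[unfolded A]] NW_per per by auto
      moreover have "(induced_map f ^^ j) A = A \<longleftrightarrow>
          (f ^^ j) (cis a) = cis a \<and> (f ^^ j) (cis b) = cis b" for j
        unfolding A using deg1_lift_funpow_arc_fixed_iff[OF L deg1_lift_funpow[OF D] ab] .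
      ultimately show ?thesis using AC by (auto simp: per_points_def)
    qed simp
  qed
  show "per_points hyperspace_C (induced_map f) N \<union> {S1} \<subseteq>
          nonwandering_set hausdorff_dist hyperspace_C (induced_map f)"
    using periodic_point_in_nonwandering_hyperspace S1_in_nonwandering_hyperspace[OF diffeo(1)]
    by (auto simp: per_points_def)
qed

section \<open>Orientation reversing maps\<close>

lemma deg1_lift_displacement:
  assumes D: "deg1_lift G" and "G t0 = t0"
  shows "\<bar>G t - t\<bar> < 2*pi"
proof -
  obtain k :: int where k: "t \<le> t0 + 2*pi * of_int k" "t0 + 2*pi * of_int k < t + 2*pi"
    using shift_into_period .
  define u where "u = t0 + 2*pi * of_int k"
  have "G u = u" using deg1_lift_shift[OF D, of t0 k] \<open>G t0 = t0\<close> by (simp add: u_def)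
  moreover have "G (u - 2*pi) = u - 2*pi"
    using deg1_lift_shift[OF D, of t0 "k - 1"] \<open>G t0 = t0\<close> by (simp add: u_def algebra_simps)
  moreover have "u - 2*pi < t" "t \<le> u" using k by (simp_all add: u_def)
  ultimately have "u - 2*pi < G t" "G t \<le> u"
    using D by (metis deg1_lift_def strict_mono_less, metis deg1_lift_def strict_mono_less_eq)
  then show ?thesis using \<open>u - 2*pi < t\<close> \<open>t \<le> u\<close> by linarith
qed

lemma deg1_lift_periodic_imp_fixed:
  assumes D: "deg1_lift H" and "H t0 = t0" "p > 0" "cis ((H ^^ p) t) = cis t"
  shows "H t = t"
proof -
  obtain k :: int where k: "(H ^^ p) t = t + 2*pi * of_int k"
    using assms(4) cis_eq_iff_int by blast
  have "\<bar>(H ^^ p) t - t\<bar> < 2*pi"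
    using deg1_lift_displacement[OF deg1_lift_funpow[OF D] funpow_fixed] \<open>H t0 = t0\<close> by blast
  then have "k = 0" using k by (intro multiple_2pi_eq_0) (simp_all add: abs_less_iff)
  then show ?thesis
    using k D \<open>p > 0\<close> strict_mono_funpow_periodic_imp_fixed by (auto simp: deg1_lift_def)
qed

lemma degm1_lift_minus_id_surj:
  assumes D: "degm1_lift F"
  shows "\<exists>t. F t - t = y"
proof -
  have cont: "continuous_on UNIV (\<lambda>t. F t - t)"
    using D unfolding degm1_lift_def by (intro continuous_intros) auto
  obtain n :: nat where n: "\<bar>F 0 - y\<bar> < real n * (4*pi)"
    using reals_Archimedean3[of "4*pi"] by auto
  have "F (2*pi * real n) = F 0 - 2*pi * real n"
    using degm1_lift_shift[OF D, of 0 "int n"] by simp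
  moreover have "F (- 2*pi * real n) = F 0 + 2*pi * real n"
    using degm1_lift_shift[OF D, of "- 2*pi * real n" "int n"] by simp
  ultimately have "F (2*pi * real n) - 2*pi * real n \<le> y" "y \<le> F (- 2*pi * real n) - (- 2*pi * real n)"
    using n by (auto simp: abs_less_iff algebra_simps)
  then show ?thesis
    using IVT2'[of "\<lambda>t. F t - t", OF _ _ _ continuous_on_subset[OF cont]] by fastforce
qed

lemma degm1_lift_square_fixed_points:
  assumes D: "degm1_lift F"
  obtains t0 t1 where "F (F t0) = t0" "F (F t1) = t1" "\<forall>k::int. t1 \<noteq> t0 + 2*pi * of_int k"
proof -
  obtain t0 t1 where t0: "F t0 = t0" and t1: "F t1 = t1 + 2*pi"
    using degm1_lift_minus_id_surj[OF D] by (metis add.commute diff_add_cancel diff_zero)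
  have "F (F t1) = t1" using D t1 by (simp add: degm1_lift_def)
  moreover have "\<forall>k::int. t1 \<noteq> t0 + 2*pi * of_int k"
  proof (intro allI notI)
    fix k :: int assume "t1 = t0 + 2*pi * of_int k"
    then have "t0 + 2*pi * of_int k + 2*pi = t0 - 2*pi * of_int k"
      using t0 t1 degm1_lift_shift[OF D, of t0 k] by simp
    then have "2*pi * of_int (2*k + 1) = 0" by (simp add: algebra_simps)
    then have "2*k + 1 = 0" by simp
    then show False by presburger
  qed
  ultimately show ?thesis using that[of t0 t1] t0 by simp
qed

lemma degm1_lift_periodic_point:
  assumes L: "circle_lift f F" and D: "degm1_lift F" and P: "cis t \<in> periodic_points S1 f"
  shows "F (F t) = t"
proof -
  obtain p where "p > 0" "(f ^^ p) (cis t) = cis t" using P by (auto simp: periodic_points_def)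
  then have "((f ^^ p) ^^ 2) (cis t) = cis t" by (simp add: numeral_2_eq_2)
  then have "cis ((F ^^ (p * 2)) t) = cis t" by (simp only: funpow_mult funpow_circle_lift[OF L])
  moreover have "F ^^ (p * 2) = (F ^^ 2) ^^ p" by (simp only: funpow_mult mult.commute)
  moreover have "F ^^ 2 = F \<circ> F" by (simp add: numeral_2_eq_2)
  ultimately have "cis (((F \<circ> F) ^^ p) t) = cis t" by simp
  moreover obtain t0 where "F (F t0) = t0" using degm1_lift_square_fixed_points[OF D] by metis
  ultimately show ?thesis
    using deg1_lift_periodic_imp_fixed[OF degm1_lift_comp[OF D D], of t0 p t] \<open>p > 0\<close> by simp
qed

lemma deg1_lift_fixed_point_gap:
  assumes D: "deg1_lift H" and t0: "H t0 = t0" and t1: "H t1 = t1"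
    and dst: "\<forall>k::int. t1 \<noteq> t0 + 2*pi * of_int k" and "a < H a"
  obtains q1 q2 where "q1 < a" "a < q2" "q2 < q1 + 2*pi" "H q1 = q1" "H q2 = q2"
    "\<And>t. q1 < t \<Longrightarrow> t < q2 \<Longrightarrow> t < H t"
proof -
  have fixed_shift: "H (t + 2*pi * of_int k) = t + 2*pi * of_int k" if "H t = t" for t k
    using deg1_lift_shift[OF D, of t k] that by simp
  obtain k :: int where k: "a - 2*pi \<le> t0 + 2*pi * of_int k" "t0 + 2*pi * of_int k < a"
    using shift_into_period by (metis diff_add_cancel)
  define l where "l = t0 + 2*pi * of_int k"
  have "H l = l" "H (l + 2*pi) = l + 2*pi"
    using fixed_shift[OF t0, of k] fixed_shift[OF t0, of "k + 1"] by (simp_all add: l_def algebra_simps)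
  moreover have "continuous_on UNIV (\<lambda>t. H t - t)"
    using D unfolding deg1_lift_def by (intro continuous_intros) auto
  ultimately obtain q1 q2 where q: "l \<le> q1" "q1 < a" "a < q2" "q2 \<le> l + 2*pi" "H q1 = q1" "H q2 = q2"
    and pos: "\<And>t. q1 < t \<Longrightarrow> t < q2 \<Longrightarrow> t < H t"
    using nearest_zeros[of "\<lambda>t. H t - t" a l "l + 2*pi"] k \<open>a < H a\<close> unfolding l_def by auto
  have "q2 \<noteq> q1 + 2*pi"
  proof
    assume q2: "q2 = q1 + 2*pi"
    have congruent: "\<exists>j::int. t = q1 + 2*pi * of_int j" if "H t = t" for t
    proof -
      obtain j :: int where j: "q1 \<le> t + 2*pi * of_int j" "t + 2*pi * of_int j < q1 + 2*pi"
        using shift_into_period .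
      have "H (t + 2*pi * of_int j) = t + 2*pi * of_int j" using fixed_shift[OF that] .
      then have "t + 2*pi * of_int j = q1" using pos j q2 by force
      then show ?thesis by (intro exI[of _ "- j"]) (simp add: algebra_simps)
    qed
    obtain j0 j1 :: int where "t0 = q1 + 2*pi * of_int j0" "t1 = q1 + 2*pi * of_int j1"
      using congruent[OF t0] congruent[OF t1] by blast
    then have "t1 = t0 + 2*pi * of_int (j1 - j0)" by (simp add: algebra_simps)
    then show False using dst by blast
  qed
  then show ?thesis using that q pos by force
qed

text \<open>Orbits in \<open>]q1, q2]\<close> move right and stay there, orbits in \<open>[q2, q1 + 2*pi]\<close> stay there;
  so only an orbit of the first kind can end near \<open>a\<close> modulo \<open>2*pi\<close>, and then \<open>j = 0\<close>.\<close>
lemma deg1_lift_gap_orbit_return: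
  assumes D: "deg1_lift H" and q: "q1 < a" "a < q2" "q2 < q1 + 2*pi" "H q1 = q1" "H q2 = q2"
    and right: "\<And>t. q1 < t \<Longrightarrow> t < q2 \<Longrightarrow> t < H t"
    and \<eta>: "0 < \<eta>" "4 * \<eta> \<le> a - q1" "4 * \<eta> \<le> q2 - a" "\<eta> \<le> 1"
    and x: "a - 2 * \<eta> < x" "x < q1 + 2*pi"
    and return: "\<bar>(H ^^ m) x - (a + 2*pi * of_int j)\<bar> < \<eta>"
  shows "x \<le> (H ^^ m) x" "(H ^^ m) x < a + \<eta>"
proof -
  have H_mono: "mono H" using D by (simp add: deg1_lift_def strict_mono_mono)
  have "H (q1 + 2*pi) = q1 + 2*pi" using D q(4) by (simp add: deg1_lift_def)
  define y where "y = (H ^^ m) x"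
  have low: "x \<le> y \<and> y \<le> q2" if "x \<le> q2"
    using mono_funpow_increasing[OF H_mono q(5), of q1 x m] right that x q \<eta> unfolding y_def by auto
  have high: "q2 \<le> y \<and> y \<le> q1 + 2*pi" if "q2 < x"
    using mono_funpow_between_fixed[OF H_mono q(5) \<open>H (q1 + 2*pi) = q1 + 2*pi\<close>, of x m] that x
    unfolding y_def by auto
  have "a - 2 * \<eta> < y" "y \<le> q1 + 2*pi"
    using low high x q \<eta> by (cases "x \<le> q2"; force)+
  then have "- (2*pi) < 2*pi * of_int j" "2*pi * of_int j < 2*pi"
    using return \<eta> pi_ge_two q unfolding y_def[symmetric] abs_less_iff by linarith+
  then have "j = 0" by (rule multiple_2pi_eq_0)
  then have "\<bar>y - a\<bar> < \<eta>" using return by (simp add: y_def)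
  then have "x \<le> q2" using high q \<eta> by force
  then show "x \<le> (H ^^ m) x" "(H ^^ m) x < a + \<eta>"
    using low \<open>\<bar>y - a\<bar> < \<eta>\<close> unfolding y_def by auto
qed

text \<open>An \<open>H\<close>-orbit from near \<open>a\<close>, followed by one jump of size less than \<open>\<eta>\<close> and a second
  \<open>H\<close>-orbit, cannot return \<open>\<eta>\<close>-close to \<open>a\<close> modulo \<open>2*pi\<close>: the return forces a point \<open>w\<close>
  near \<open>a\<close> with \<open>H w - w < 3*\<eta>\<close>, while \<open>H - id\<close> is bounded below near \<open>a\<close>.\<close>
lemma deg1_lift_no_return_in_gap:
  assumes D: "deg1_lift H" and q: "q1 < a" "a < q2" "q2 < q1 + 2*pi" "H q1 = q1" "H q2 = q2"
    and right: "\<And>t. q1 < t \<Longrightarrow> t < q2 \<Longrightarrow> t < H t"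
  obtains \<eta> where "\<eta> > 0"
    "\<And>c m x m' j. \<bar>c - a\<bar> < \<eta> \<Longrightarrow> \<bar>x - H ((H ^^ m) c)\<bar> < \<eta> \<Longrightarrow>
       \<bar>(H ^^ m') x - (a + 2*pi * of_int j)\<bar> < \<eta> \<Longrightarrow> False"
proof -
  have H_mono: "mono H" using D by (simp add: deg1_lift_def strict_mono_mono)
  have "continuous (at a) (\<lambda>t. H t - t)"
    using D unfolding deg1_lift_def by (intro continuous_intros) (auto simp: continuous_on_eq_continuous_at)
  moreover have "0 < H a - a" using right q(1,2) by simp
  ultimately obtain \<rho> where "\<rho> > 0" and moves: "\<And>t. \<bar>t - a\<bar> < \<rho> \<Longrightarrow> (H a - a) / 2 < H t - t"
    using continuous_at_lower_bound[of a "\<lambda>t. H t - t"] by blast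
  define \<eta> where "\<eta> = Min {(a - q1) / 4, (q2 - a) / 4, (q1 + 2*pi - q2) / 2, \<rho> / 2, (H a - a) / 6, 1}"
  have "\<eta> \<le> (a - q1) / 4" "\<eta> \<le> (q2 - a) / 4" "\<eta> \<le> (q1 + 2*pi - q2) / 2"
    "\<eta> \<le> \<rho> / 2" "\<eta> \<le> (H a - a) / 6" "\<eta> \<le> 1"
    unfolding \<eta>_def by (rule Min_le; simp)+
  moreover have "\<eta> > 0" using q \<open>\<rho> > 0\<close> right[of a] unfolding \<eta>_def by simp
  ultimately have \<eta>: "\<eta> > 0" "4 * \<eta> \<le> a - q1" "4 * \<eta> \<le> q2 - a" "2 * \<eta> \<le> q1 + 2*pi - q2"
    "2 * \<eta> \<le> \<rho>" "6 * \<eta> \<le> H a - a" "\<eta> \<le> 1"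
    by (simp_all add: le_divide_eq mult.commute)
  show ?thesis
  proof (rule that[OF \<open>\<eta> > 0\<close>])
    fix c m x m' j
    assume c: "\<bar>c - a\<bar> < \<eta>" and x: "\<bar>x - H ((H ^^ m) c)\<bar> < \<eta>"
      and return: "\<bar>(H ^^ m') x - (a + 2*pi * of_int j)\<bar> < \<eta>"
    define w where "w = (H ^^ m) c"
    have "q1 < c" "c \<le> q2" using c \<eta> by auto
    then have "c \<le> w" "w \<le> q2"
      using mono_funpow_increasing[OF H_mono q(5), of q1 c m] right unfolding w_def by auto
    moreover have "w \<le> H w" using right[of w] \<open>q1 < c\<close> calculation q(5) by force
    moreover have "H w \<le> q2" using monoD[OF H_mono \<open>w \<le> q2\<close>] q(5) by simp
    ultimately have "c \<le> w" "w \<le> H w" "H w \<le> q2" by simp_all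
    then have "a - 2 * \<eta> < x" "x < q1 + 2*pi" using x c \<eta> unfolding w_def by auto
    then have "x \<le> (H ^^ m') x" "(H ^^ m') x < a + \<eta>"
      using deg1_lift_gap_orbit_return[OF D q right \<eta>(1-3,7) _ _ return] by auto
    then have "\<bar>w - a\<bar> < \<rho>" "H w - w < 3 * \<eta>"
      using x c \<eta> \<open>c \<le> w\<close> \<open>w \<le> H w\<close> unfolding w_def by auto
    then show False using moves \<eta> by force
  qed
qed

lemma deg1_lift_no_return_right:
  assumes D: "deg1_lift H" and "H t0 = t0" "H t1 = t1"
    and "\<forall>k::int. t1 \<noteq> t0 + 2*pi * of_int k" and "a < H a"
  obtains \<eta> where "\<eta> > 0"
    "\<And>c m x m' j. \<bar>c - a\<bar> < \<eta> \<Longrightarrow> \<bar>x - H ((H ^^ m) c)\<bar> < \<eta> \<Longrightarrow>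
       \<bar>(H ^^ m') x - (a + 2*pi * of_int j)\<bar> < \<eta> \<Longrightarrow> False"
proof -
  obtain q1 q2 where "q1 < a" "a < q2" "q2 < q1 + 2*pi" "H q1 = q1" "H q2 = q2"
    "\<And>t. q1 < t \<Longrightarrow> t < q2 \<Longrightarrow> t < H t"
    using deg1_lift_fixed_point_gap[OF assms] by blast
  from deg1_lift_no_return_in_gap[OF D this] show ?thesis using that by blast
qed

lemma deg1_lift_no_return:
  assumes D: "deg1_lift H" and t0: "H t0 = t0" and t1: "H t1 = t1"
    and dst: "\<forall>k::int. t1 \<noteq> t0 + 2*pi * of_int k" and "H a \<noteq> a"
  obtains \<eta> where "\<eta> > 0"
    "\<And>c m x m' j. \<bar>c - a\<bar> < \<eta> \<Longrightarrow> \<bar>x - H ((H ^^ m) c)\<bar> < \<eta> \<Longrightarrow>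
       \<bar>(H ^^ m') x - (a + 2*pi * of_int j)\<bar> < \<eta> \<Longrightarrow> False"
proof (cases "a < H a")
  case True
  then show ?thesis using deg1_lift_no_return_right[OF D t0 t1 dst] that by blast
next
  case False
  define H' where "H' t = - H (- t)" for t
  have H'_funpow: "(H' ^^ m) t = - (H ^^ m) (- t)" for m t
    by (induction m arbitrary: t) (simp_all add: H'_def)
  have cont: "continuous_on UNIV H" and "strict_mono H" using D by (simp_all add: deg1_lift_def)
  have "continuous_on UNIV H'"
    unfolding H'_def by (intro continuous_on_minus continuous_on_compose2[OF cont] continuous_on_id) auto
  moreover have "strict_mono H'"
    using \<open>strict_mono H\<close> unfolding H'_def strict_mono_def by simp
  moreover have "H' (t + 2*pi) = H' t + 2*pi" for t
    using deg1_lift_shift[OF D, of "- t" "-1"] by (simp add: H'_def)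
  ultimately have "deg1_lift H'" by (simp add: deg1_lift_def)
  moreover have "\<forall>k::int. - t1 \<noteq> - t0 + 2*pi * of_int k"
    using dst by (metis add.inverse_inverse minus_add_distrib mult_minus_right of_int_minus)
  moreover have "- a < H' (- a)" using False \<open>H a \<noteq> a\<close> by (simp add: H'_def)
  ultimately obtain \<eta> where "\<eta> > 0" and no_return:
    "\<And>c m x m' j. \<bar>c - (- a)\<bar> < \<eta> \<Longrightarrow> \<bar>x - H' ((H' ^^ m) c)\<bar> < \<eta> \<Longrightarrow>
       \<bar>(H' ^^ m') x - (- a + 2*pi * of_int j)\<bar> < \<eta> \<Longrightarrow> False"
    using deg1_lift_no_return_right[of H' "- t0" "- t1" "- a"] t0 t1 by (auto simp: H'_def)
  show ?thesis
  proof (rule that[OF \<open>\<eta> > 0\<close>])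
    fix c m x m' j
    assume "\<bar>c - a\<bar> < \<eta>" "\<bar>x - H ((H ^^ m) c)\<bar> < \<eta>" "\<bar>(H ^^ m') x - (a + 2*pi * of_int j)\<bar> < \<eta>"
    moreover have "\<bar>- u - (- a + 2*pi * of_int (- j))\<bar> = \<bar>u - (a + 2*pi * of_int j)\<bar>" for u
      by (simp add: abs_minus_commute algebra_simps)
    ultimately show False
      using no_return[of "- c" "- x" m m' "- j"] by (simp add: H'_funpow H'_def abs_minus_commute)
  qed
qed

text \<open>Writing an odd iterate as \<open>F \<circ> H ^^ m = H ^^ m \<circ> F\<close> with \<open>H = F \<circ> F\<close>, a return that
  exchanges the endpoints yields, through continuity of \<open>F\<close> at \<open>b\<close>, an \<open>H\<close>-orbit from
  near \<open>a\<close> with one small jump that comes back near \<open>a\<close>.\<close>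
lemma degm1_lift_no_odd_return:
  assumes DF: "degm1_lift F" and "F (F a) \<noteq> a"
  obtains \<eta> where "\<eta> > 0"
    "\<And>n c d c' d'. odd n \<Longrightarrow> \<bar>c - a\<bar> < \<eta> \<Longrightarrow> \<bar>d - b\<bar> < \<eta> \<Longrightarrow> \<bar>c' - a\<bar> < \<eta> \<Longrightarrow> \<bar>d' - b\<bar> < \<eta> \<Longrightarrow>
       cis ((F ^^ n) c) = cis d' \<Longrightarrow> cis ((F ^^ n) d) = cis c' \<Longrightarrow> False"
proof -
  define H where "H = F \<circ> F"
  have DH: "deg1_lift H" unfolding H_def using degm1_lift_comp[OF DF DF] .
  obtain t0 t1 where "H t0 = t0" "H t1 = t1" "\<forall>k::int. t1 \<noteq> t0 + 2*pi * of_int k"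
    using degm1_lift_square_fixed_points[OF DF] unfolding H_def by (metis comp_apply)
  moreover have "H a \<noteq> a" using \<open>F (F a) \<noteq> a\<close> by (simp add: H_def)
  ultimately obtain \<eta>1 where "\<eta>1 > 0" and no_return:
    "\<And>c m x m' j. \<bar>c - a\<bar> < \<eta>1 \<Longrightarrow> \<bar>x - H ((H ^^ m) c)\<bar> < \<eta>1 \<Longrightarrow>
       \<bar>(H ^^ m') x - (a + 2*pi * of_int j)\<bar> < \<eta>1 \<Longrightarrow> False"
    using deg1_lift_no_return[OF DH] by blast
  have "continuous (at b) F" using DF by (simp add: degm1_lift_def continuous_on_eq_continuous_at)
  then obtain \<rho> where "\<rho> > 0" and \<rho>: "\<And>x. dist x b < \<rho> \<Longrightarrow> dist (F x) (F b) < \<eta>1 / 2"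
    using \<open>\<eta>1 > 0\<close> unfolding continuous_at_eps_delta by (metis half_gt_zero)
  show ?thesis
  proof (rule that[of "min \<eta>1 \<rho>"])
    show "min \<eta>1 \<rho> > 0" using \<open>\<eta>1 > 0\<close> \<open>\<rho> > 0\<close> by simp
    fix n c d c' d'
    assume "odd n" and close: "\<bar>c - a\<bar> < min \<eta>1 \<rho>" "\<bar>d - b\<bar> < min \<eta>1 \<rho>" "\<bar>c' - a\<bar> < min \<eta>1 \<rho>"
      "\<bar>d' - b\<bar> < min \<eta>1 \<rho>" and ends: "cis ((F ^^ n) c) = cis d'" "cis ((F ^^ n) d) = cis c'"
    obtain m where "n = Suc (2 * m)" using \<open>odd n\<close> oddE by fastforce
    then obtain k k' :: int where k: "F ((H ^^ m) c) = d' + 2*pi * of_int k"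
      and k': "(H ^^ m) (F d) = c' + 2*pi * of_int k'"
      using ends funpow_Suc_double[of m F] cis_eq_iff_int unfolding H_def by (metis comp_apply)
    define x where "x = F d - 2*pi * of_int k"
    have "H ((H ^^ m) c) = F d' - 2*pi * of_int k"
      using k degm1_lift_shift[OF DF, of d' k] by (simp add: H_def)
    moreover have "\<bar>F d - F b\<bar> < \<eta>1 / 2" "\<bar>F d' - F b\<bar> < \<eta>1 / 2"
      using \<rho>[of d] \<rho>[of d'] close by (simp_all add: dist_real_def)
    ultimately have "\<bar>x - H ((H ^^ m) c)\<bar> < \<eta>1"
      unfolding x_def abs_less_iff by linarith
    moreover have "(H ^^ m) x = (H ^^ m) (F d) - 2*pi * of_int k"
      using deg1_lift_shift[OF deg1_lift_funpow[OF DH, of m], of "F d" "- k"] by (simp add: x_def)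
    then have "\<bar>(H ^^ m) x - (a + 2*pi * of_int (k' - k))\<bar> < \<eta>1"
      using k' close by (simp add: algebra_simps)
    ultimately show False using no_return[of c x m m "k' - k"] close by simp
  qed
qed

lemma nonwandering_arc_endpoints_degm1:
  assumes L: "circle_lift f F" and DF: "degm1_lift F" and ab: "a \<le> b" "b < a + 2*pi"
    and NW: "cis ` {a..b} \<in> nonwandering_set hausdorff_dist hyperspace_C (induced_map f)"
    and "F (F a) \<noteq> a \<or> F (F b) \<noteq> b"
  shows "cis a \<in> nonwandering_set dist S1 f \<and> cis b \<in> nonwandering_set dist S1 f"
proof -
  have C: "continuous_on UNIV F" using DF by (simp add: degm1_lift_def)
  obtain \<eta> where "\<eta> > 0" and no_odd:
    "\<And>n c d c' d'. odd n \<Longrightarrow> \<bar>c - a\<bar> < \<eta> \<Longrightarrow> \<bar>d - b\<bar> < \<eta> \<Longrightarrow> \<bar>c' - a\<bar> < \<eta> \<Longrightarrow> \<bar>d' - b\<bar> < \<eta> \<Longrightarrow>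
       cis ((F ^^ n) c) = cis d' \<Longrightarrow> cis ((F ^^ n) d) = cis c' \<Longrightarrow> False"
  proof (cases "F (F a) = a")
    case True
    then obtain \<eta> where "\<eta> > 0" and no_odd:
      "\<And>n c d c' d'. odd n \<Longrightarrow> \<bar>c - b\<bar> < \<eta> \<Longrightarrow> \<bar>d - a\<bar> < \<eta> \<Longrightarrow> \<bar>c' - b\<bar> < \<eta> \<Longrightarrow> \<bar>d' - a\<bar> < \<eta> \<Longrightarrow>
         cis ((F ^^ n) c) = cis d' \<Longrightarrow> cis ((F ^^ n) d) = cis c' \<Longrightarrow> False"
      using degm1_lift_no_odd_return[OF DF, of b a] assms(6) by blast
    show ?thesis using that[OF \<open>\<eta> > 0\<close>] no_odd by blast
  qed (use degm1_lift_no_odd_return[OF DF] that in blast)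
  have "\<exists>n c d c' d'. n \<ge> 1 \<and> \<bar>c - a\<bar> < \<epsilon> \<and> \<bar>d - b\<bar> < \<epsilon> \<and> \<bar>c' - a\<bar> < \<epsilon> \<and> \<bar>d' - b\<bar> < \<epsilon>
      \<and> (f ^^ n) (cis c) = cis c' \<and> (f ^^ n) (cis d) = cis d'" if "\<epsilon> > 0" for \<epsilon>
  proof -
    have "min \<epsilon> \<eta> > 0" using \<open>\<epsilon> > 0\<close> \<open>\<eta> > 0\<close> by simp
    then obtain n c d c' d' where nd: "n \<ge> 1" "\<bar>c - a\<bar> < min \<epsilon> \<eta>" "\<bar>d - b\<bar> < min \<epsilon> \<eta>"
      "\<bar>c' - a\<bar> < min \<epsilon> \<eta>" "\<bar>d' - b\<bar> < min \<epsilon> \<eta>"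
      "c \<le> d" "d - c < 2*pi" "c' \<le> d'" "d' - c' < 2*pi" "cis ` ((F ^^ n) ` {c..d}) = cis ` {c'..d'}"
      using nonwandering_arc_returns[OF L C ab NW] by blast
    have "even n"
    proof (rule ccontr)
      assume "odd n"
      then have "cis ((F ^^ n) d) = cis c' \<and> cis ((F ^^ n) c) = cis d'"
        using degm1_lift_arc_endpoints[OF _ nd(6-10)] degm1_lift_funpow[OF DF, of n] by blast
      then show False using no_odd[OF \<open>odd n\<close>] nd(2-5) by auto
    qed
    then have "cis ((F ^^ n) c) = cis c' \<and> cis ((F ^^ n) d) = cis d'"
      using deg1_lift_arc_endpoints[OF _ nd(6-10)] degm1_lift_funpow[OF DF, of n] by blast
    then show ?thesis using nd(1-5) funpow_circle_lift[OF L] by (metis min_less_iff_conj)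
  qed
  then show ?thesis by (metis cis_in_nonwandering_setI)
qed

lemma nonwandering_arc_degm1_period_2:
  assumes L: "circle_lift f F" and DF: "degm1_lift F" and ab: "a \<le> b" "b < a + 2*pi"
    and NW: "cis ` {a..b} \<in> nonwandering_set hausdorff_dist hyperspace_C (induced_map f)"
    and NW_per: "nonwandering_set dist S1 f \<subseteq> periodic_points S1 f"
  shows "(induced_map f ^^ 2) (cis ` {a..b}) = cis ` {a..b}"
proof -
  have "F (F a) = a \<and> F (F b) = b"
  proof (rule ccontr)
    assume "\<not> (F (F a) = a \<and> F (F b) = b)"
    moreover have "cis a \<in> periodic_points S1 f" "cis b \<in> periodic_points S1 f"
      using nonwandering_arc_endpoints_degm1[OF L DF ab NW] calculation NW_per by auto
    ultimately show False using degm1_lift_periodic_point[OF L DF] by blast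
  qed
  then have "(f ^^ 2) (cis a) = cis a" "(f ^^ 2) (cis b) = cis b"
    using funpow_circle_lift[OF L, of 2] by (simp_all add: numeral_2_eq_2)
  then show ?thesis
    using deg1_lift_funpow_arc_fixed_iff[OF L _ ab] degm1_lift_funpow[OF DF, of 2] by simp
qed

theorem nonwandering_hyperspace_orientation_reversing:
  assumes MS: "morse_smale f" and OR: "orientation_reversing f"
  shows "nonwandering_set hausdorff_dist hyperspace_C (induced_map f) =
           per_points hyperspace_C (induced_map f) 2 \<union> fixed_points hyperspace_C (induced_map f)"
proof
  have diffeo: "f ` S1 = S1" "inj_on f S1"
    and NW_per: "nonwandering_set dist S1 f \<subseteq> periodic_points S1 f"
    using MS by (auto simp: morse_smale_def circle_C1_diffeo_def)
  obtain F where L: "circle_lift f F" and DF: "degm1_lift F"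
    using orientation_reversing_degm1_lift[OF OR diffeo(2)] .
  show "nonwandering_set hausdorff_dist hyperspace_C (induced_map f) \<subseteq>
          per_points hyperspace_C (induced_map f) 2 \<union> fixed_points hyperspace_C (induced_map f)"
  proof
    fix A assume NW: "A \<in> nonwandering_set hausdorff_dist hyperspace_C (induced_map f)"
    then have AC: "A \<in> hyperspace_C" by (simp add: nonwandering_set_def)
    have "(induced_map f ^^ 2) A = A"
    proof (cases "A = S1")
      case False
      then obtain a b where "a \<le> b" "b < a + 2*pi" "A = cis ` {a..b}"
        using hyperspace_C_arc[OF AC] by blast
      then show ?thesis using nonwandering_arc_degm1_period_2[OF L DF _ _ _ NW_per] NW by blast
    qed (simp add: diffeo(1) induced_map_def numeral_2_eq_2)
    then show "A \<in> per_points hyperspace_C (induced_map f) 2 \<union> fixed_points hyperspace_C (induced_map f)"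
      using AC by (auto simp: per_points_def fixed_points_def numeral_2_eq_2 less_Suc_eq)
  qed
  show "per_points hyperspace_C (induced_map f) 2 \<union> fixed_points hyperspace_C (induced_map f) \<subseteq>
          nonwandering_set hausdorff_dist hyperspace_C (induced_map f)"
    using periodic_point_in_nonwandering_hyperspace[of _ 2 f] periodic_point_in_nonwandering_hyperspace[of _ 1 f]
    by (auto simp: per_points_def fixed_points_def)
qed

theorem lemma3p2:
  fixes f :: "complex \<Rightarrow> complex"
  assumes "morse_smale f"
  shows "(\<forall>N. orientation_preserving f \<and>
              (\<forall>p \<in> periodic_points S1 f. p \<in> per_points S1 f N) \<longrightarrow>
            nonwandering_set hausdorff_dist hyperspace_C (induced_map f) =
              per_points hyperspace_C (induced_map f) N \<union> {S1})
       \<and> (orientation_reversing f \<longrightarrow>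
            nonwandering_set hausdorff_dist hyperspace_C (induced_map f) =
              per_points hyperspace_C (induced_map f) 2 \<union> fixed_points hyperspace_C (induced_map f))"
  using nonwandering_hyperspace_orientation_preserving[OF assms]
    nonwandering_hyperspace_orientation_reversing[OF assms] by blast

end
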